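(* Let $P\in\Delta_{\mathcal{T},\mathcal{X},\mathcal{Y}}$ such that under $P$, $T$ is conditionally independent of $X$ given $Y$, and $T$ is conditionally independent of $Y$ given $X$. If there exist $x_0\in\mathcal{X}$, $y_0\in\mathcal{Y}$ with $P(X=x_0,Y=y_0)>0$, $H_P(X\mid Y=y_0)\neq 0$ and $H_P(Y\mid X=x_0)\ne 0$, then $\arg\max_{Q\in\Delta_P}H_Q(T\mid X,Y)$ contains more than one element.
   Context: $T,X,Y$ are random variables with finite state spaces $\mathcal{T},\mathcal{X},\mathcal{Y}$; $\Delta_{\mathcal{T},\mathcal{X},\mathcal{Y}}$ is the set of all joint distributions on $\mathcal{T}\times\mathcal{X}\times\mathcal{Y}$. For $P\in\Delta_{\mathcal{T},\mathcal{X},\mathcal{Y}}$, $\Delta_P=\{Q\in\Delta_{\mathcal{T},\mathcal{X},\mathcal{Y}}: Q(X=x,T=t)=P(X=x,T=t),\ Q(Y=y,T=t)=P(Y=y,T=t)\ \forall x,y,t\}$. $H_P(X\mid Y=y_0)$ is the entropy of the conditional distribution of $X$ given $Y=y_0$ under $P$; $H_Q(T\mid X,Y)$ the conditional entropy under $Q$. *)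

theory Defs
  imports "HOL-Analysis.Analysis"
begin

type_synonym ('t,'x,'y) jdist = "'t \<times> 'x \<times> 'y \<Rightarrow> real"

definition is_dist :: "('t::finite,'x::finite,'y::finite) jdist \<Rightarrow> bool" where
  "is_dist P \<longleftrightarrow> (\<forall>z. 0 \<le> P z) \<and> (\<Sum>z\<in>UNIV. P z) = 1"

definition pXY :: "('t::finite,'x,'y) jdist \<Rightarrow> 'x \<Rightarrow> 'y \<Rightarrow> real" where
  "pXY P x y = (\<Sum>t\<in>UNIV. P (t,x,y))"
definition pTX :: "('t,'x,'y::finite) jdist \<Rightarrow> 't \<Rightarrow> 'x \<Rightarrow> real" where
  "pTX P t x = (\<Sum>y\<in>UNIV. P (t,x,y))"
definition pTY :: "('t,'x::finite,'y) jdist \<Rightarrow> 't \<Rightarrow> 'y \<Rightarrow> real" where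
  "pTY P t y = (\<Sum>x\<in>UNIV. P (t,x,y))"
definition pX :: "('t::finite,'x,'y::finite) jdist \<Rightarrow> 'x \<Rightarrow> real" where
  "pX P x = (\<Sum>t\<in>UNIV. \<Sum>y\<in>UNIV. P (t,x,y))"
definition pY :: "('t::finite,'x::finite,'y) jdist \<Rightarrow> 'y \<Rightarrow> real" where
  "pY P y = (\<Sum>t\<in>UNIV. \<Sum>x\<in>UNIV. P (t,x,y))"

definition cond_indep_T_X_given_Y :: "('t::finite,'x::finite,'y::finite) jdist \<Rightarrow> bool" where
  "cond_indep_T_X_given_Y P \<longleftrightarrow>
     (\<forall>t x y. P (t,x,y) * pY P y = pTY P t y * pXY P x y)"

definition cond_indep_T_Y_given_X :: "('t::finite,'x::finite,'y::finite) jdist \<Rightarrow> bool" where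
  "cond_indep_T_Y_given_X P \<longleftrightarrow>
     (\<forall>t x y. P (t,x,y) * pX P x = pTX P t x * pXY P x y)"

text \<open>Shannon entropy of a finite pmf (natural log; base is irrelevant here), with 0 log 0 = 0.\<close>
definition entropy_fn :: "('a::finite \<Rightarrow> real) \<Rightarrow> real" where
  "entropy_fn p = - (\<Sum>a\<in>UNIV. if p a > 0 then p a * ln (p a) else 0)"

definition condH_X_given_Y_eq :: "('t::finite,'x::finite,'y::finite) jdist \<Rightarrow> 'y \<Rightarrow> real" where
  "condH_X_given_Y_eq P y0 = entropy_fn (\<lambda>x. pXY P x y0 / pY P y0)"

definition condH_Y_given_X_eq :: "('t::finite,'x::finite,'y::finite) jdist \<Rightarrow> 'x \<Rightarrow> real" where
  "condH_Y_given_X_eq P x0 = entropy_fn (\<lambda>y. pXY P x0 y / pX P x0)"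

definition condH_T_given_XY :: "('t::finite,'x::finite,'y::finite) jdist \<Rightarrow> real" where
  "condH_T_given_XY Q = - (\<Sum>(t,x,y)\<in>UNIV.
      if Q (t,x,y) > 0 then Q (t,x,y) * ln (Q (t,x,y) / pXY Q x y) else 0)"

definition Delta_P :: "('t::finite,'x::finite,'y::finite) jdist \<Rightarrow> ('t,'x,'y) jdist set" where
  "Delta_P P = {Q. is_dist Q \<and> (\<forall>t x. pTX Q t x = pTX P t x) \<and> (\<forall>t y. pTY Q t y = pTY P t y)}"

definition argmax_condH :: "('t::finite,'x::finite,'y::finite) jdist \<Rightarrow> ('t,'x,'y) jdist set" where
  "argmax_condH P = {Q \<in> Delta_P P. \<forall>Q'\<in>Delta_P P. condH_T_given_XY Q' \<le> condH_T_given_XY Q}"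

end

theory Submission
  imports Defs
begin

text \<open>Since conditioning reduces entropy, \<open>H\<^sub>Q(T|X,Y) \<le> H\<^sub>Q(T|X)\<close> for every \<open>Q\<close>, with equality
  when \<open>T\<close> is conditionally independent of \<open>Y\<close> given \<open>X\<close>; and \<open>H\<^sub>Q(T|X)\<close> is the same for all
  \<open>Q \<in> \<Delta>\<^sub>P\<close>. Hence every \<open>Q \<in> \<Delta>\<^sub>P\<close> with \<open>T \<perp> Y | X\<close> is a maximiser, \<open>P\<close> among them.
  The entropy hypotheses give \<open>b \<noteq> x\<^sub>0\<close> and \<open>d \<noteq> y\<^sub>0\<close> with \<open>P(b,y\<^sub>0) > 0\<close> and \<open>P(x\<^sub>0,d) > 0\<close>;
  via the common value \<open>y\<^sub>0\<close>, the two independences force \<open>P(T|X=x\<^sub>0) = P(T|X=b)\<close>.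
  Moving mass \<open>\<epsilon>\<close> around the rectangle \<open>{x\<^sub>0,b} \<times> {y\<^sub>0,d}\<close> of the \<open>(X,Y)\<close>-marginal, with \<open>T\<close> distributed
  according to this common conditional, keeps both pair marginals and \<open>T \<perp> Y | X\<close>, and yields a
  second maximiser.\<close>

lemma sum_UNIV_prod3:
  "(\<Sum>z\<in>(UNIV::('a::finite \<times> 'b::finite \<times> 'c::finite) set). f z)
     = (\<Sum>a\<in>UNIV. \<Sum>b\<in>UNIV. \<Sum>c\<in>UNIV. f (a,b,c))"
  by (simp add: UNIV_Times_UNIV[symmetric] sum.cartesian_product' del: UNIV_Times_UNIV)

lemma pX_eq_sum_pTX: "pX P x = (\<Sum>t\<in>UNIV. pTX P t x)"
  by (simp add: pX_def pTX_def)

lemma pX_eq_sum_pXY: "pX P x = (\<Sum>y\<in>UNIV. pXY P x y)"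
  unfolding pX_def pXY_def by (rule sum.swap)

lemma pY_eq_sum_pXY: "pY P y = (\<Sum>x\<in>UNIV. pXY P x y)"
  unfolding pY_def pXY_def by (rule sum.swap)

lemma sum_UNIV_eq_sum_pTX:
  fixes Q :: "('t::finite,'x::finite,'y::finite) jdist"
  shows "(\<Sum>z\<in>UNIV. Q z) = (\<Sum>t\<in>UNIV. \<Sum>x\<in>UNIV. pTX Q t x)"
  by (subst sum_UNIV_prod3) (simp add: pTX_def)

lemma sum_pXY_eq_sum_UNIV:
  fixes Q :: "('t::finite,'x::finite,'y::finite) jdist"
  shows "(\<Sum>x\<in>UNIV. \<Sum>y\<in>UNIV. pXY Q x y) = (\<Sum>z\<in>UNIV. Q z)"
proof -
  have "(\<Sum>x\<in>UNIV. \<Sum>y\<in>UNIV. pXY Q x y) = (\<Sum>x\<in>UNIV. \<Sum>t\<in>UNIV. \<Sum>y\<in>UNIV. Q (t,x,y))"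
    unfolding pXY_def by (intro sum.cong refl sum.swap)
  also have "\<dots> = (\<Sum>z\<in>UNIV. Q z)"
    by (subst sum_UNIV_prod3) (rule sum.swap)
  finally show ?thesis .
qed

context
  fixes Q :: "('t::finite,'x::finite,'y::finite) jdist"
  assumes dist: "is_dist Q"
begin

lemma dist_nonneg: "0 \<le> Q z"
  using dist unfolding is_dist_def by blast

lemma pXY_nonneg: "0 \<le> pXY Q x y"
  unfolding pXY_def by (intro sum_nonneg dist_nonneg)

lemma pTX_nonneg: "0 \<le> pTX Q t x"
  unfolding pTX_def by (intro sum_nonneg dist_nonneg)

lemma le_pXY: "Q (t,x,y) \<le> pXY Q x y"
  unfolding pXY_def by (intro member_le_sum dist_nonneg) auto

lemma le_pTX: "Q (t,x,y) \<le> pTX Q t x"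
  unfolding pTX_def by (intro member_le_sum dist_nonneg) auto

lemma pTX_le_pX: "pTX Q t x \<le> pX Q x"
  unfolding pX_eq_sum_pTX by (intro member_le_sum pTX_nonneg) auto

lemma pXY_le_pX: "pXY Q x y \<le> pX Q x"
  unfolding pX_eq_sum_pXY by (intro member_le_sum pXY_nonneg) auto

lemma pXY_le_pY: "pXY Q x y \<le> pY Q y"
  unfolding pY_eq_sum_pXY by (intro member_le_sum pXY_nonneg) auto

end

section \<open>Conditional entropy of \<open>T\<close> given \<open>X\<close>\<close>

definition condH_T_given_X :: "('t::finite,'x::finite,'y::finite) jdist \<Rightarrow> real" where
  "condH_T_given_X Q = - (\<Sum>t\<in>UNIV. \<Sum>x\<in>UNIV. pTX Q t x * ln (pTX Q t x / pX Q x))"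

lemma condH_T_given_X_eq_sum:
  "condH_T_given_X Q = - (\<Sum>t\<in>UNIV. \<Sum>x\<in>UNIV. \<Sum>y\<in>UNIV. Q (t,x,y) * ln (pTX Q t x / pX Q x))"
  unfolding condH_T_given_X_def pTX_def sum_distrib_right ..

lemma condH_T_given_X_cong:
  assumes "\<And>t x. pTX Q t x = pTX P t x"
  shows "condH_T_given_X Q = condH_T_given_X P"
  unfolding condH_T_given_X_def pX_eq_sum_pTX assms ..

lemma condH_T_given_XY_eq_sum:
  assumes "is_dist Q"
  shows "condH_T_given_XY Q
           = - (\<Sum>t\<in>UNIV. \<Sum>x\<in>UNIV. \<Sum>y\<in>UNIV. Q (t,x,y) * ln (Q (t,x,y) / pXY Q x y))"
proof -
  have "(if Q (t,x,y) > 0 then Q (t,x,y) * ln (Q (t,x,y) / pXY Q x y) else 0)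
          = Q (t,x,y) * ln (Q (t,x,y) / pXY Q x y)" for t x y
    using dist_nonneg[OF assms, of "(t,x,y)"] by auto
  then show ?thesis
    unfolding condH_T_given_XY_def sum_UNIV_prod3 by simp
qed

text \<open>The pointwise form of Gibbs' inequality \<open>ln u \<le> u - 1\<close>, applied to \<open>u = a b / (q c)\<close>.\<close>

lemma neg_mult_ln_div_le:
  fixes q a b c :: real
  assumes "0 \<le> q" "q \<le> a" "q \<le> b" "b \<le> c"
  shows "- (q * ln (q / a)) \<le> - (q * ln (b / c)) + (a * b / c - q)"
proof (cases "q = 0")
  case False
  then have q: "q > 0" and pos: "a > 0" "b > 0" "c > 0"
    using assms by auto
  have "ln (a * b / (q * c)) \<le> a * b / (q * c) - 1"
    using pos q by (intro ln_le_minus_one) auto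
  moreover have "ln (a * b / (q * c)) = ln (b / c) - ln (q / a)"
    using pos q by (simp add: ln_div ln_mult)
  ultimately have "q * (ln (b / c) - ln (q / a)) \<le> q * (a * b / (q * c) - 1)"
    using q by (intro mult_left_mono) auto
  also have "\<dots> = a * b / c - q"
    using q by (simp add: field_simps)
  finally show ?thesis
    by (simp add: algebra_simps)
qed (use assms in simp)

lemma sum_pXY_mult_cond_T_le_1:
  assumes "is_dist Q"
  shows "(\<Sum>t\<in>UNIV. \<Sum>x\<in>UNIV. \<Sum>y\<in>UNIV. pXY Q x y * pTX Q t x / pX Q x) \<le> 1"
proof -
  have "(\<Sum>t\<in>UNIV. \<Sum>x\<in>UNIV. \<Sum>y\<in>UNIV. pXY Q x y * pTX Q t x / pX Q x)
          = (\<Sum>x\<in>UNIV. \<Sum>t\<in>UNIV. \<Sum>y\<in>UNIV. pXY Q x y * pTX Q t x / pX Q x)"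
    by (rule sum.swap)
  also have "\<dots> = (\<Sum>x\<in>UNIV. \<Sum>y\<in>UNIV. \<Sum>t\<in>UNIV. pXY Q x y * pTX Q t x / pX Q x)"
    by (intro sum.cong refl sum.swap)
  also have "\<dots> = (\<Sum>x\<in>UNIV. \<Sum>y\<in>UNIV. pXY Q x y * (pX Q x / pX Q x))"
    unfolding pX_eq_sum_pTX[of Q] sum_divide_distrib sum_distrib_left by (simp add: mult.assoc)
  also have "\<dots> \<le> (\<Sum>x\<in>UNIV. \<Sum>y\<in>UNIV. pXY Q x y)"
    \<comment> \<open>only \<open>\<le>\<close>: the factor \<open>pX Q x / pX Q x\<close> is \<open>0\<close> when \<open>pX Q x = 0\<close>\<close>
    by (intro sum_mono mult_left_le pXY_nonneg[OF assms]) simp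
  also have "\<dots> = 1"
    using assms by (simp add: sum_pXY_eq_sum_UNIV is_dist_def)
  finally show ?thesis .
qed

theorem condH_T_given_XY_le_condH_T_given_X:
  assumes "is_dist Q"
  shows "condH_T_given_XY Q \<le> condH_T_given_X Q"
proof -
  have "condH_T_given_XY Q \<le> (\<Sum>t\<in>UNIV. \<Sum>x\<in>UNIV. \<Sum>y\<in>UNIV.
          - (Q (t,x,y) * ln (pTX Q t x / pX Q x)) + (pXY Q x y * pTX Q t x / pX Q x - Q (t,x,y)))"
    unfolding condH_T_given_XY_eq_sum[OF assms] sum_negf[symmetric]
    using assms by (intro sum_mono neg_mult_ln_div_le dist_nonneg le_pXY le_pTX pTX_le_pX)
  also have "\<dots> = condH_T_given_X Q
      + (\<Sum>t\<in>UNIV. \<Sum>x\<in>UNIV. \<Sum>y\<in>UNIV. pXY Q x y * pTX Q t x / pX Q x) - 1"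
    using assms unfolding condH_T_given_X_eq_sum
    by (simp add: sum.distrib sum_subtractf sum_negf is_dist_def sum_UNIV_prod3)
  also have "\<dots> \<le> condH_T_given_X Q"
    using sum_pXY_mult_cond_T_le_1[OF assms] by simp
  finally show ?thesis .
qed

lemma condH_T_given_XY_eq_condH_T_given_X:
  assumes "is_dist Q" "cond_indep_T_Y_given_X Q"
  shows "condH_T_given_XY Q = condH_T_given_X Q"
proof -
  have "Q (t,x,y) * ln (Q (t,x,y) / pXY Q x y) = Q (t,x,y) * ln (pTX Q t x / pX Q x)" for t x y
  proof (cases "Q (t,x,y) = 0")
    case False
    then have "Q (t,x,y) > 0"
      using dist_nonneg[OF assms(1), of "(t,x,y)"] by linarith
    then have "pXY Q x y > 0" "pX Q x > 0"
      using le_pXY[OF assms(1), of t x y] le_pTX[OF assms(1), of t x y]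
        pTX_le_pX[OF assms(1), of t x] by linarith+
    moreover have "Q (t,x,y) * pX Q x = pTX Q t x * pXY Q x y"
      using assms(2) by (simp add: cond_indep_T_Y_given_X_def)
    ultimately have "Q (t,x,y) / pXY Q x y = pTX Q t x / pX Q x"
      by (simp add: field_simps)
    then show ?thesis
      by simp
  qed simp
  then show ?thesis
    unfolding condH_T_given_XY_eq_sum[OF assms(1)] condH_T_given_X_eq_sum by presburger
qed

theorem cond_indep_T_Y_given_X_in_argmax_condH:
  assumes "Q \<in> Delta_P P" "cond_indep_T_Y_given_X Q"
  shows "Q \<in> argmax_condH P"
  unfolding argmax_condH_def
proof (intro CollectI conjI ballI assms(1))
  fix Q' assume Q': "Q' \<in> Delta_P P"
  have "condH_T_given_XY Q' \<le> condH_T_given_X Q'"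
    using Q' by (intro condH_T_given_XY_le_condH_T_given_X) (simp add: Delta_P_def)
  also have "\<dots> = condH_T_given_X Q"
    using Q' assms(1) by (intro condH_T_given_X_cong) (simp add: Delta_P_def)
  also have "\<dots> = condH_T_given_XY Q"
    using assms by (intro condH_T_given_XY_eq_condH_T_given_X[symmetric]) (auto simp: Delta_P_def)
  finally show "condH_T_given_XY Q' \<le> condH_T_given_XY Q" .
qed

lemma entropy_fn_point_mass:
  assumes "\<And>a. a \<noteq> a0 \<Longrightarrow> p a = 0" "p a0 = 1"
  shows "entropy_fn p = 0"
proof -
  have "(if p a > 0 then p a * ln (p a) else 0) = 0" for a
    using assms by (cases "a = a0") auto
  then show ?thesis
    unfolding entropy_fn_def by simp
qed

lemma entropy_fn_nonzero_imp_second_support_point: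
  fixes f :: "'a::finite \<Rightarrow> real"
  assumes "\<And>a. 0 \<le> f a" "0 < f a0" "entropy_fn (\<lambda>a. f a / (\<Sum>b\<in>UNIV. f b)) \<noteq> 0"
  obtains b where "b \<noteq> a0" "0 < f b"
proof (rule ccontr)
  assume "\<not> thesis"
  with that have "\<not> 0 < f a" if "a \<noteq> a0" for a
    using \<open>a \<noteq> a0\<close> by blast
  then have zero: "f a = 0" if "a \<noteq> a0" for a
    using that assms(1)[of a] by force
  have "(\<Sum>b\<in>UNIV. f b) = f a0 + (\<Sum>b\<in>UNIV - {a0}. f b)"
    by (rule sum.remove) auto
  also have "(\<Sum>b\<in>UNIV - {a0}. f b) = 0"
    using zero by (intro sum.neutral) auto
  finally have "entropy_fn (\<lambda>a. f a / (\<Sum>b\<in>UNIV. f b)) = 0"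
    using assms(2) zero by (intro entropy_fn_point_mass[of a0]) auto
  with assms(3) show False ..
qed

section \<open>A second maximiser\<close>

definition dipole :: "'a \<Rightarrow> 'a \<Rightarrow> 'a \<Rightarrow> real" where
  "dipole a b x = (if x = a then 1 else 0) - (if x = b then 1 else 0)"

lemma sum_dipole: "(\<Sum>x\<in>(UNIV::'a::finite set). dipole a b x) = 0"
  by (simp add: dipole_def sum_subtractf)

text \<open>\<open>r\<close> plays the role of the conditional distribution of \<open>T\<close> given \<open>X\<close>.\<close>

definition perturb ::
    "('t,'x,'y) jdist \<Rightarrow> real \<Rightarrow> ('t \<Rightarrow> real) \<Rightarrow> ('x \<Rightarrow> real) \<Rightarrow> ('y \<Rightarrow> real) \<Rightarrow> ('t,'x,'y) jdist" where
  "perturb P e r u v = (\<lambda>(t,x,y). P (t,x,y) + e * r t * u x * v y)"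

lemma perturb_apply: "perturb P e r u v (t,x,y) = P (t,x,y) + e * r t * u x * v y"
  by (simp add: perturb_def)

context
  fixes P :: "('t::finite,'x::finite,'y::finite) jdist"
    and e :: real and r :: "'t \<Rightarrow> real" and u :: "'x \<Rightarrow> real" and v :: "'y \<Rightarrow> real"
begin

lemma pTX_perturb:
  assumes "(\<Sum>y\<in>UNIV. v y) = 0"
  shows "pTX (perturb P e r u v) t x = pTX P t x"
  using assms by (simp add: pTX_def perturb_apply sum.distrib flip: sum_distrib_left)

lemma pTY_perturb:
  assumes "(\<Sum>x\<in>UNIV. u x) = 0"
  shows "pTY (perturb P e r u v) t y = pTY P t y"
proof -
  have "(\<Sum>x\<in>UNIV. e * r t * u x * v y) = e * r t * v y * (\<Sum>x\<in>UNIV. u x)"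
    by (simp add: sum_distrib_left mult_ac)
  then show ?thesis
    using assms by (simp add: pTY_def perturb_apply sum.distrib)
qed

lemma pXY_perturb:
  assumes "(\<Sum>t\<in>UNIV. r t) = 1"
  shows "pXY (perturb P e r u v) x y = pXY P x y + e * u x * v y"
proof -
  have "(\<Sum>t\<in>UNIV. e * r t * u x * v y) = e * u x * v y * (\<Sum>t\<in>UNIV. r t)"
    by (simp add: sum_distrib_left mult_ac)
  then show ?thesis
    using assms by (simp add: pXY_def perturb_apply sum.distrib)
qed

lemma cond_indep_T_Y_given_X_perturb:
  assumes "cond_indep_T_Y_given_X P" "(\<Sum>y\<in>UNIV. v y) = 0" "(\<Sum>t\<in>UNIV. r t) = 1"
    and cond: "\<And>t x. u x \<noteq> 0 \<Longrightarrow> pTX P t x = r t * pX P x"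
  shows "cond_indep_T_Y_given_X (perturb P e r u v)"
  unfolding cond_indep_T_Y_given_X_def
proof (intro allI)
  fix t x y
  let ?Q = "perturb P e r u v"
  have pX: "pX ?Q x = pX P x"
    unfolding pX_eq_sum_pTX pTX_perturb[OF assms(2)] ..
  have r: "r t * pX P x * u x = pTX P t x * u x"
    using cond[of x t] by (cases "u x = 0") auto
  have "?Q (t,x,y) * pX ?Q x = P (t,x,y) * pX P x + e * v y * (r t * pX P x * u x)"
    unfolding perturb_apply pX by (simp add: algebra_simps)
  also have "\<dots> = pTX P t x * pXY P x y + e * v y * (pTX P t x * u x)"
    using assms(1) unfolding r by (simp add: cond_indep_T_Y_given_X_def)
  also have "\<dots> = pTX ?Q t x * pXY ?Q x y"
    unfolding pTX_perturb[OF assms(2)] pXY_perturb[OF assms(3)] by (simp add: algebra_simps)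
  finally show "?Q (t,x,y) * pX ?Q x = pTX ?Q t x * pXY ?Q x y" .
qed

end

lemma cond_T_given_X_eq_across_common_Y:
  assumes "is_dist P" "cond_indep_T_X_given_Y P" "cond_indep_T_Y_given_X P"
    and "0 < pXY P a c" "0 < pXY P b c"
  shows "pTX P t a / pX P a = pTX P t b / pX P b"
proof -
  have "pTX P t x / pX P x = pTY P t c / pY P c" if "0 < pXY P x c" for x
  proof -
    have "0 < pX P x" "0 < pY P c"
      using that pXY_le_pX[OF assms(1)] pXY_le_pY[OF assms(1)] by (metis order.strict_trans2)+
    moreover have "P (t,x,c) * pX P x = pTX P t x * pXY P x c"
      "P (t,x,c) * pY P c = pTY P t c * pXY P x c"
      using assms(2,3) by (simp_all add: cond_indep_T_X_given_Y_def cond_indep_T_Y_given_X_def)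
    ultimately have "P (t,x,c) = pTX P t x / pX P x * pXY P x c"
      "P (t,x,c) = pTY P t c / pY P c * pXY P x c"
      by (simp_all add: field_simps)
    then have "pTX P t x / pX P x * pXY P x c = pTY P t c / pY P c * pXY P x c"
      by simp
    then show ?thesis
      using that by (metis mult_right_cancel order_less_irrefl)
  qed
  then show ?thesis
    using assms(4,5) by simp
qed

text \<open>The step \<open>e\<close> is the largest one keeping the two decreased cells \<open>(b,c)\<close> and \<open>(a,d)\<close>
  nonnegative.\<close>

theorem exists_other_cond_indep_in_Delta_P:
  assumes dist: "is_dist P" and ci: "cond_indep_T_Y_given_X P"
    and "a \<noteq> b" "c \<noteq> d" "0 < pXY P b c" "0 < pXY P a d"
    and cond_eq: "\<And>t. pTX P t a / pX P a = pTX P t b / pX P b"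
  obtains Q where "Q \<in> Delta_P P" "cond_indep_T_Y_given_X Q" "Q \<noteq> P"
proof -
  define r where "r t = pTX P t a / pX P a" for t
  define e where "e = min (pXY P b c) (pXY P a d)"
  define Q where "Q = perturb P e r (dipole a b) (dipole c d)"
  have pXa: "0 < pX P a" and pXb: "0 < pX P b"
    using assms(5,6) pXY_le_pX[OF dist] by (metis order.strict_trans2)+
  have r_nonneg: "0 \<le> r t" for t
    unfolding r_def using pTX_nonneg[OF dist] pXa by simp
  have sum_r: "(\<Sum>t\<in>UNIV. r t) = 1"
    unfolding r_def using pXa by (simp flip: sum_divide_distrib pX_eq_sum_pTX)
  have pX_pos: "0 < pX P x" and r_eq: "r t = pTX P t x / pX P x" if "dipole a b x \<noteq> 0" for t x
    using that pXa pXb cond_eq[of t] by (auto simp: r_def dipole_def split: if_splits)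
  have cond: "pTX P t x = r t * pX P x" if "dipole a b x \<noteq> 0" for t x
    using pX_pos[OF that] r_eq[OF that] by simp
  have cell: "P (t,x,y) = r t * pXY P x y" if "dipole a b x \<noteq> 0" for t x y
  proof -
    have "P (t,x,y) * pX P x = r t * pXY P x y * pX P x"
      using ci cond[OF that] by (simp add: cond_indep_T_Y_given_X_def mult_ac)
    then show ?thesis
      using pX_pos[OF that] by simp
  qed
  have Q_nonneg: "0 \<le> Q (t,x,y)" for t x y
  proof -
    consider (decreased) "dipole a b x * dipole c d y = -1" "dipole a b x \<noteq> 0" "e \<le> pXY P x y"
      | (increased) "0 \<le> dipole a b x * dipole c d y"
      using assms(3,4) unfolding e_def
      by (cases "x = a"; cases "x = b"; cases "y = c"; cases "y = d") (auto simp: dipole_def)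
    then show ?thesis
    proof cases
      case decreased
      then have "Q (t,x,y) = r t * (pXY P x y - e)"
        by (simp add: Q_def perturb_apply cell algebra_simps)
      then show ?thesis
        using decreased r_nonneg[of t] by simp
    next
      case increased
      then show ?thesis
        using dist_nonneg[OF dist] r_nonneg[of t] assms(5,6)
        by (simp add: Q_def perturb_apply e_def mult.assoc)
    qed
  qed
  have marginals: "pTX Q t x = pTX P t x" "pTY Q t y = pTY P t y" for t x y
    unfolding Q_def by (simp_all add: pTX_perturb pTY_perturb sum_dipole)
  have "Q \<in> Delta_P P"
    using Q_nonneg dist unfolding Delta_P_def is_dist_def
    by (auto simp: marginals sum_UNIV_eq_sum_pTX[of Q] sum_UNIV_eq_sum_pTX[of P])
  moreover have "cond_indep_T_Y_given_X Q"
    unfolding Q_def using ci cond sum_r by (intro cond_indep_T_Y_given_X_perturb) (auto simp: sum_dipole)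
  moreover obtain t where "r t \<noteq> 0"
    using sum_r by force
  then have "Q (t,a,c) \<noteq> P (t,a,c)"
    using assms(3-6) by (simp add: Q_def perturb_apply dipole_def e_def)
  ultimately show ?thesis
    using that by blast
qed

theorem mainTheorem11:
  fixes P :: "('t::finite, 'x::finite, 'y::finite) jdist"
    and x0 :: 'x and y0 :: 'y
  assumes "is_dist P"
    and "cond_indep_T_X_given_Y P"
    and "cond_indep_T_Y_given_X P"
    and "pXY P x0 y0 > 0"
    and "condH_X_given_Y_eq P y0 \<noteq> 0"
    and "condH_Y_given_X_eq P x0 \<noteq> 0"
  shows "\<exists>Q1 Q2. Q1 \<in> argmax_condH P \<and> Q2 \<in> argmax_condH P \<and> Q1 \<noteq> Q2"
proof -
  obtain b where "b \<noteq> x0" "0 < pXY P b y0"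
    using entropy_fn_nonzero_imp_second_support_point[of "\<lambda>x. pXY P x y0" x0]
      pXY_nonneg[OF assms(1)] assms(4,5)
    by (auto simp: condH_X_given_Y_eq_def pY_eq_sum_pXY)
  obtain d where "d \<noteq> y0" "0 < pXY P x0 d"
    using entropy_fn_nonzero_imp_second_support_point[of "\<lambda>y. pXY P x0 y" y0]
      pXY_nonneg[OF assms(1)] assms(4,6)
    by (auto simp: condH_Y_given_X_eq_def pX_eq_sum_pXY)
  obtain Q where "Q \<in> Delta_P P" "cond_indep_T_Y_given_X Q" "Q \<noteq> P"
    by (rule exists_other_cond_indep_in_Delta_P[OF assms(1,3) \<open>b \<noteq> x0\<close>[symmetric]
          \<open>d \<noteq> y0\<close>[symmetric] \<open>0 < pXY P b y0\<close> \<open>0 < pXY P x0 d\<close>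
          cond_T_given_X_eq_across_common_Y[OF assms(1-4) \<open>0 < pXY P b y0\<close>]])
  moreover have "P \<in> Delta_P P"
    using assms(1) by (simp add: Delta_P_def)
  ultimately show ?thesis
    using cond_indep_T_Y_given_X_in_argmax_condH assms(3) by blast
qed

end
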